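(* Let $f:\mathbb{R}^p\to\mathbb{R}$ be of the form $f(x)=g(Hx)$ with $H\in\mathbb{R}^{m\times p}$ and $g:\mathbb{R}^m\to\mathbb{R}$ an $\alpha$-strongly convex ($\alpha>0$) and $L$-smooth function, and assume the set $X^*$ of minimizers of $f$ is nonempty. Let $c_H>0$ be a Hoffman coefficient of $H$, i.e. a constant with $\|Hx-H[x]\|^2\ge c_H\|x-[x]\|^2$ for all $x\in\mathbb{R}^p$, and let $C_H=1/\|H\|_2^2$. Then for all $x\in\mathbb{R}^p$, $$\langle\nabla f(x)-\nabla f([x]),\,x-[x]\rangle\ge\frac{L\alpha c_H}{L+\alpha}\|x-[x]\|^2+\frac{C_H}{L+\alpha}\|\nabla f(x)-\nabla f([x])\|^2.$$
   Context: $g$ is $L$-smooth if $\|\nabla g(u)-\nabla g(v)\|\le L\|u-v\|$, and $\alpha$-strongly convex if $g(v)\ge g(u)+\langle v-u,\nabla g(u)\rangle+\frac\alpha2\|v-u\|^2$ for all $u,v$. $f$ is convex, so $X^*$ is closed and convex and $[x]$ denotes the Euclidean projection of $x$ onto $X^*$. $\|H\|_2=\sup_{x\ne0}\|Hx\|/\|x\|$; norms are Euclidean. *)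

theory Defs
  imports "HOL-Analysis.Analysis"
begin

end

theory Submission
  imports Defs
begin

text \<open>Strong convexity and smoothness of \<open>g\<close> combine (Nesterov) into
  \<open>\<parallel>\<nabla>g u - \<nabla>g v\<parallel>\<^sup>2 + \<alpha>L \<parallel>u - v\<parallel>\<^sup>2 \<le> (L + \<alpha>) \<langle>\<nabla>g u - \<nabla>g v, u - v\<rangle>\<close>: the function
  \<open>g - \<alpha>/2 \<parallel>_\<parallel>\<^sup>2\<close> is convex with an \<open>(L - \<alpha>)\<close>-Lipschitz gradient, and such gradients are
  \<open>1/(L - \<alpha>)\<close>-cocoercive (Baillon--Haddad). Since \<open>\<nabla>f x = H\<^sup>T \<nabla>g (H x)\<close>, the inner
  product \<open>\<langle>\<nabla>f x - \<nabla>f y, x - y\<rangle>\<close> equals the one for \<open>g\<close> at \<open>H x, H y\<close>, while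
  \<open>\<parallel>\<nabla>f x - \<nabla>f y\<parallel> \<le> \<parallel>H\<parallel>\<^sub>2 \<parallel>\<nabla>g (H x) - \<nabla>g (H y)\<parallel>\<close>. This holds for every pair \<open>x, y\<close>.\<close>

lemma lipschitz_gradient_quadratic_upper_bound:
  fixes g :: "'a::real_inner \<Rightarrow> real"
  assumes grad: "\<And>u. (g has_derivative (\<lambda>h. G u \<bullet> h)) (at u)"
    and lipschitz: "\<And>u v. norm (G u - G v) \<le> L * norm (u - v)"
  shows "g v \<le> g u + G u \<bullet> (v - u) + L / 2 * (norm (v - u))\<^sup>2"
proof -
  define d where "d = v - u"
  define k where "k t = g (u + t *\<^sub>R d) - t * (G u \<bullet> d) - L / 2 * t\<^sup>2 * (norm d)\<^sup>2" for t
  have g_line: "((\<lambda>t. g (u + t *\<^sub>R d)) has_real_derivative (G (u + t *\<^sub>R d) \<bullet> d)) (at t)" for t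
  proof -
    have "((\<lambda>t. u + t *\<^sub>R d) has_derivative (\<lambda>h. h *\<^sub>R d)) (at t)"
      by (auto intro!: derivative_eq_intros)
    from has_derivative_compose[OF this grad] show ?thesis
      unfolding has_field_derivative_def
      by (rule has_derivative_eq_rhs) (auto simp: fun_eq_iff)
  qed
  have k_deriv: "(k has_real_derivative ((G (u + t *\<^sub>R d) - G u) \<bullet> d - L * t * (norm d)\<^sup>2)) (at t)" for t
    unfolding k_def[abs_def]
    by (rule derivative_eq_intros g_line refl)+ (simp add: inner_diff_left algebra_simps)
  have "k 1 \<le> k 0"
  proof (rule DERIV_nonpos_imp_nonincreasing[of 0 1 k])
    fix t :: real assume t: "0 \<le> t" "t \<le> 1"
    have "(G (u + t *\<^sub>R d) - G u) \<bullet> d \<le> norm (G (u + t *\<^sub>R d) - G u) * norm d"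
      by (rule norm_cauchy_schwarz)
    also have "\<dots> \<le> L * norm (t *\<^sub>R d) * norm d"
      using lipschitz[of "u + t *\<^sub>R d" u] by (intro mult_right_mono) auto
    also have "\<dots> = L * t * (norm d)\<^sup>2" using t by (simp add: power2_eq_square)
    finally show "\<exists>y. DERIV k t :> y \<and> y \<le> 0" using k_deriv by force
  qed simp
  then show ?thesis by (simp add: k_def d_def)
qed

text \<open>Minimising the upper bound at \<open>y\<close> along the direction \<open>G y - G x\<close> and comparing
  with the supporting hyperplane at \<open>x\<close>.\<close>
lemma convex_smooth_gap_lower_bound:
  fixes \<phi> :: "'a::real_inner \<Rightarrow> real"
  assumes convex: "\<And>u v. \<phi> v \<ge> \<phi> u + G u \<bullet> (v - u)"
    and smooth: "\<And>u v. \<phi> v \<le> \<phi> u + G u \<bullet> (v - u) + M / 2 * (norm (v - u))\<^sup>2"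
    and "M > 0"
  shows "\<phi> y \<ge> \<phi> x + G x \<bullet> (y - x) + (norm (G y - G x))\<^sup>2 / (2 * M)"
proof -
  define D where "D = G y - G x"
  define w where "w = y - (1 / M) *\<^sub>R D"
  have "\<phi> w \<le> \<phi> y + G y \<bullet> (w - y) + M / 2 * (norm (w - y))\<^sup>2" by (rule smooth)
  also have "\<dots> = \<phi> y - (G y \<bullet> D) / M + (norm D)\<^sup>2 / (2 * M)"
    using \<open>M > 0\<close> by (simp add: w_def power2_eq_square field_simps)
  finally have upper: "\<phi> w \<le> \<phi> y - (G y \<bullet> D) / M + (norm D)\<^sup>2 / (2 * M)" .
  have lower: "\<phi> w \<ge> \<phi> x + G x \<bullet> (y - x) - (G x \<bullet> D) / M"
    using convex[of x w] by (simp add: w_def inner_diff_right algebra_simps)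
  have "(G y \<bullet> D) / M - (G x \<bullet> D) / M = (norm D)\<^sup>2 / M"
    by (simp add: D_def power2_norm_eq_inner inner_diff_left diff_divide_distrib)
  then show ?thesis using upper lower unfolding D_def[symmetric] by (simp add: field_simps)
qed

lemma convex_smooth_cocoercive_pos:
  fixes \<phi> :: "'a::real_inner \<Rightarrow> real"
  assumes convex: "\<And>u v. \<phi> v \<ge> \<phi> u + G u \<bullet> (v - u)"
    and smooth: "\<And>u v. \<phi> v \<le> \<phi> u + G u \<bullet> (v - u) + M / 2 * (norm (v - u))\<^sup>2"
    and "M > 0"
  shows "(norm (G y - G x))\<^sup>2 \<le> M * ((G y - G x) \<bullet> (y - x))"
proof -
  note gap = convex_smooth_gap_lower_bound[OF convex smooth \<open>M > 0\<close>]
  have "G x \<bullet> (y - x) + G y \<bullet> (x - y) = - ((G y - G x) \<bullet> (y - x))"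
    by (simp add: inner_diff_left inner_diff_right inner_commute)
  then have "(norm (G y - G x))\<^sup>2 / M \<le> (G y - G x) \<bullet> (y - x)"
    using gap[of x y] gap[of y x] by (simp add: norm_minus_commute field_simps)
  then show ?thesis using \<open>M > 0\<close> by (simp add: field_simps)
qed

text \<open>Baillon--Haddad; the case \<open>M = 0\<close> follows from \<open>M > 0\<close> by letting \<open>M\<close> decrease.\<close>
lemma convex_smooth_cocoercive:
  fixes \<phi> :: "'a::real_inner \<Rightarrow> real"
  assumes convex: "\<And>u v. \<phi> v \<ge> \<phi> u + G u \<bullet> (v - u)"
    and smooth: "\<And>u v. \<phi> v \<le> \<phi> u + G u \<bullet> (v - u) + M / 2 * (norm (v - u))\<^sup>2"
    and "M \<ge> 0"
  shows "(norm (G y - G x))\<^sup>2 \<le> M * ((G y - G x) \<bullet> (y - x))"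
proof (rule tendsto_lowerbound)
  have "((\<lambda>e. M + e) \<longlongrightarrow> M + 0) (at_right 0)"
    by (intro tendsto_add tendsto_const tendsto_ident_at)
  from tendsto_mult_right[OF this]
  show "((\<lambda>e. (M + e) * ((G y - G x) \<bullet> (y - x))) \<longlongrightarrow> M * ((G y - G x) \<bullet> (y - x))) (at_right 0)"
    by simp
  have perturbed: "(norm (G y - G x))\<^sup>2 \<le> (M + e) * ((G y - G x) \<bullet> (y - x))" if "e > 0" for e
  proof (rule convex_smooth_cocoercive_pos[OF convex])
    fix u v :: 'a
    have "M / 2 * (norm (v - u))\<^sup>2 \<le> (M + e) / 2 * (norm (v - u))\<^sup>2"
      using \<open>e > 0\<close> by (intro mult_right_mono divide_right_mono) simp_all
    then show "\<phi> v \<le> \<phi> u + G u \<bullet> (v - u) + (M + e) / 2 * (norm (v - u))\<^sup>2"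
      using smooth[of v u] by linarith
  qed (use \<open>M \<ge> 0\<close> that in simp)
  show "\<forall>\<^sub>F e in at_right 0. (norm (G y - G x))\<^sup>2 \<le> (M + e) * ((G y - G x) \<bullet> (y - x))"
    using eventually_at_right_less by (rule eventually_mono) (rule perturbed)
qed simp

lemma strongly_convex_smooth_modulus_le:
  fixes g :: "'a::{real_inner, perfect_space} \<Rightarrow> real"
  assumes strongly_convex: "\<And>u v. g v \<ge> g u + (v - u) \<bullet> G u + \<alpha> / 2 * (norm (v - u))\<^sup>2"
    and lipschitz: "\<And>u v. norm (G u - G v) \<le> L * norm (u - v)"
  shows "\<alpha> \<le> L"
proof -
  obtain e :: 'a where e: "norm e = 1" using vector_choose_size[of 1] by auto
  have "\<alpha> \<le> (G e - G 0) \<bullet> e"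
    using strongly_convex[of 0 e] strongly_convex[of e 0] e
    by (simp add: inner_diff_left inner_diff_right inner_commute)
  also have "\<dots> \<le> norm (G e - G 0) * norm e" by (rule norm_cauchy_schwarz)
  also have "\<dots> \<le> L" using lipschitz[of e 0] e by simp
  finally show ?thesis .
qed

lemma strongly_convex_smooth_gradient_inequality:
  fixes g :: "'a::{real_inner, perfect_space} \<Rightarrow> real"
  assumes grad: "\<And>u. (g has_derivative (\<lambda>h. G u \<bullet> h)) (at u)"
    and strongly_convex: "\<And>u v. g v \<ge> g u + (v - u) \<bullet> G u + \<alpha> / 2 * (norm (v - u))\<^sup>2"
    and lipschitz: "\<And>u v. norm (G u - G v) \<le> L * norm (u - v)"
  shows "(norm (G u - G v))\<^sup>2 + \<alpha> * L * (norm (u - v))\<^sup>2 \<le> (L + \<alpha>) * ((G u - G v) \<bullet> (u - v))"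
proof -
  define \<phi> where "\<phi> u = g u - \<alpha> / 2 * (norm u)\<^sup>2" for u
  define G\<phi> where "G\<phi> u = G u - \<alpha> *\<^sub>R u" for u
  have square_shift: "\<alpha> / 2 * (norm (v - u))\<^sup>2 - \<alpha> / 2 * (norm v)\<^sup>2
      = - \<alpha> / 2 * (norm u)\<^sup>2 - (\<alpha> *\<^sub>R u) \<bullet> (v - u)" for u v :: 'a
    by (simp add: power2_norm_eq_inner inner_diff_left inner_diff_right inner_commute algebra_simps)
  have convex: "\<phi> v \<ge> \<phi> u + G\<phi> u \<bullet> (v - u)" for u v
    using strongly_convex[of u v] square_shift[of v u]
    by (simp add: \<phi>_def G\<phi>_def inner_diff_left inner_commute algebra_simps)
  have smooth: "\<phi> v \<le> \<phi> u + G\<phi> u \<bullet> (v - u) + (L - \<alpha>) / 2 * (norm (v - u))\<^sup>2" for u v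
    using lipschitz_gradient_quadratic_upper_bound[of g G L v u, OF grad lipschitz] square_shift[of v u]
    by (simp add: \<phi>_def G\<phi>_def inner_diff_left inner_commute algebra_simps diff_divide_distrib)
  define a where "a = (G u - G v) \<bullet> (u - v)"
  define b where "b = (norm (G u - G v))\<^sup>2"
  define c where "c = (norm (u - v))\<^sup>2"
  have "\<alpha> \<le> L" by (rule strongly_convex_smooth_modulus_le[OF strongly_convex lipschitz])
  then have "(norm (G\<phi> u - G\<phi> v))\<^sup>2 \<le> (L - \<alpha>) * ((G\<phi> u - G\<phi> v) \<bullet> (u - v))"
    by (intro convex_smooth_cocoercive[OF convex smooth]) simp
  moreover have "(norm (G\<phi> u - G\<phi> v))\<^sup>2 = b - 2 * \<alpha> * a + \<alpha>\<^sup>2 * c"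
    unfolding a_def b_def c_def G\<phi>_def power2_norm_eq_inner
    by (simp add: inner_diff_left inner_diff_right inner_commute algebra_simps power2_eq_square)
  moreover have "(G\<phi> u - G\<phi> v) \<bullet> (u - v) = a - \<alpha> * c"
    unfolding a_def c_def G\<phi>_def power2_norm_eq_inner
    by (simp add: inner_diff_left inner_diff_right inner_commute algebra_simps)
  ultimately have "b - 2 * \<alpha> * a + \<alpha>\<^sup>2 * c \<le> (L - \<alpha>) * (a - \<alpha> * c)" by simp
  then show ?thesis unfolding a_def b_def c_def by (simp add: algebra_simps power2_eq_square)
qed

lemma gradient_of_linear_composition:
  assumes A: "bounded_linear A"
    and f_def: "\<And>x. f x = g (A x)"
    and grad_g: "\<And>u. (g has_derivative (\<lambda>h. G u \<bullet> h)) (at u)"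
    and grad_f: "\<And>x. (f has_derivative (\<lambda>h. F x \<bullet> h)) (at x)"
  shows "F x \<bullet> h = G (A x) \<bullet> A h"
proof -
  have "(f has_derivative (\<lambda>h. G (A x) \<bullet> A h)) (at x)"
    unfolding f_def[abs_def]
    using has_derivative_compose[OF bounded_linear_imp_has_derivative[OF A] grad_g] .
  from has_derivative_unique[OF grad_f this] show ?thesis by meson
qed

lemma adjoint_norm_le_onorm:
  assumes A: "bounded_linear A"
    and adjoint: "\<And>h. z \<bullet> h = w \<bullet> A h"
  shows "norm z \<le> onorm A * norm w"
proof (cases "z = 0")
  case True
  then show ?thesis using onorm_pos_le[OF A] by simp
next
  case False
  have "norm z * norm z = w \<bullet> A z" by (metis adjoint power2_norm_eq_inner power2_eq_square)
  also have "\<dots> \<le> norm w * norm (A z)" by (rule norm_cauchy_schwarz)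
  also have "\<dots> \<le> norm w * (onorm A * norm z)"
    by (intro mult_left_mono onorm[OF A]) simp
  also have "\<dots> = (onorm A * norm w) * norm z" by simp
  finally show ?thesis using False by simp
qed

lemma composite_gradient_inequality:
  fixes A :: "'a::real_inner \<Rightarrow> 'b::{real_inner, perfect_space}"
  assumes A: "bounded_linear A"
    and f_def: "\<And>x. f x = g (A x)"
    and grad_g: "\<And>u. (g has_derivative (\<lambda>h. G u \<bullet> h)) (at u)"
    and grad_f: "\<And>x. (f has_derivative (\<lambda>h. F x \<bullet> h)) (at x)"
    and alpha_pos: "\<alpha> > 0"
    and strongly_convex: "\<And>u v. g v \<ge> g u + (v - u) \<bullet> G u + \<alpha> / 2 * (norm (v - u))\<^sup>2"
    and lipschitz: "\<And>u v. norm (G u - G v) \<le> L * norm (u - v)"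
  shows "L * \<alpha> / (L + \<alpha>) * (norm (A x - A y))\<^sup>2 + 1 / (onorm A)\<^sup>2 / (L + \<alpha>) * (norm (F x - F y))\<^sup>2
           \<le> (F x - F y) \<bullet> (x - y)"
proof -
  define d where "d = G (A x) - G (A y)"
  have adjoint: "(F x - F y) \<bullet> h = d \<bullet> A h" for h
    using gradient_of_linear_composition[OF A f_def grad_g grad_f]
    by (simp add: d_def inner_diff_left)
  have inner_eq: "(F x - F y) \<bullet> (x - y) = d \<bullet> (A x - A y)"
    using adjoint[of "x - y"] linear_diff[OF bounded_linear.linear[OF A]] by simp
  have "norm (F x - F y) \<le> onorm A * norm d"
    using adjoint_norm_le_onorm[OF A adjoint] .
  then have "(norm (F x - F y))\<^sup>2 \<le> (onorm A)\<^sup>2 * (norm d)\<^sup>2"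
    by (metis norm_ge_zero power_mono power_mult_distrib)
  then have norm_bound: "1 / (onorm A)\<^sup>2 * (norm (F x - F y))\<^sup>2 \<le> (norm d)\<^sup>2"
    by (cases "onorm A = 0") (simp_all add: field_simps)
  have "(norm d)\<^sup>2 + \<alpha> * L * (norm (A x - A y))\<^sup>2 \<le> (L + \<alpha>) * (d \<bullet> (A x - A y))"
    unfolding d_def by (rule strongly_convex_smooth_gradient_inequality[OF grad_g strongly_convex lipschitz])
  with norm_bound have "L * \<alpha> * (norm (A x - A y))\<^sup>2 + 1 / (onorm A)\<^sup>2 * (norm (F x - F y))\<^sup>2
      \<le> (L + \<alpha>) * ((F x - F y) \<bullet> (x - y))"
    unfolding inner_eq mult.commute[of \<alpha> L] by linarith
  moreover have "L + \<alpha> > 0"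
    using strongly_convex_smooth_modulus_le[OF strongly_convex lipschitz] alpha_pos by simp
  ultimately have "(L * \<alpha> * (norm (A x - A y))\<^sup>2 + 1 / (onorm A)\<^sup>2 * (norm (F x - F y))\<^sup>2) / (L + \<alpha>)
      \<le> (F x - F y) \<bullet> (x - y)"
    by (simp add: pos_divide_le_eq mult.commute)
  moreover have "(L * \<alpha> * (norm (A x - A y))\<^sup>2 + 1 / (onorm A)\<^sup>2 * (norm (F x - F y))\<^sup>2) / (L + \<alpha>)
      = L * \<alpha> / (L + \<alpha>) * (norm (A x - A y))\<^sup>2 + 1 / (onorm A)\<^sup>2 / (L + \<alpha>) * (norm (F x - F y))\<^sup>2"
    by (simp add: add_divide_distrib)
  ultimately show ?thesis by simp
qed

theorem lemma5p1:
  fixes g :: "real^'m \<Rightarrow> real" and Gg :: "real^'m \<Rightarrow> real^'m"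
    and f :: "real^'p \<Rightarrow> real" and Gf :: "real^'p \<Rightarrow> real^'p"
    and H :: "real^'p^'m" and L \<alpha> c_H :: real
  assumes f_def: "\<And>x. f x = g (H *v x)"
    and grad_g: "\<And>u. (g has_derivative (\<lambda>h. Gg u \<bullet> h)) (at u)"
    and grad_f: "\<And>x. (f has_derivative (\<lambda>h. Gf x \<bullet> h)) (at x)"
    and alpha_pos: "\<alpha> > 0"
    and strongly_convex: "\<And>u v. g v \<ge> g u + (v - u) \<bullet> Gg u + \<alpha> / 2 * (norm (v - u))\<^sup>2"
    and smooth: "\<And>u v. norm (Gg u - Gg v) \<le> L * norm (u - v)"
    and nonempty: "{x. \<forall>y. f x \<le> f y} \<noteq> {}"
    and cH_pos: "c_H > 0"
    and hoffman: "\<And>x. (norm (H *v x - H *v closest_point {x. \<forall>y. f x \<le> f y} x))\<^sup>2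
                     \<ge> c_H * (norm (x - closest_point {x. \<forall>y. f x \<le> f y} x))\<^sup>2"
  shows "\<forall>x. (let px = closest_point {x. \<forall>y. f x \<le> f y} x;
                  C_H = 1 / (onorm (\<lambda>v. H *v v))\<^sup>2 in
              (Gf x - Gf px) \<bullet> (x - px)
                \<ge> L * \<alpha> * c_H / (L + \<alpha>) * (norm (x - px))\<^sup>2
                  + C_H / (L + \<alpha>) * (norm (Gf x - Gf px))\<^sup>2)"
proof -
  have "L * \<alpha> * c_H / (L + \<alpha>) * (norm (x - px))\<^sup>2
      + 1 / (onorm (\<lambda>v. H *v v))\<^sup>2 / (L + \<alpha>) * (norm (Gf x - Gf px))\<^sup>2 \<le> (Gf x - Gf px) \<bullet> (x - px)"
    if px: "px = closest_point {x. \<forall>y. f x \<le> f y} x" for x px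
  proof -
    have "\<alpha> \<le> L" by (rule strongly_convex_smooth_modulus_le[OF strongly_convex smooth])
    then have "L * \<alpha> / (L + \<alpha>) \<ge> 0" using alpha_pos by simp
    from mult_left_mono[OF hoffman[of x, folded px] this]
    have "L * \<alpha> * c_H / (L + \<alpha>) * (norm (x - px))\<^sup>2 \<le> L * \<alpha> / (L + \<alpha>) * (norm (H *v x - H *v px))\<^sup>2"
      by simp
    moreover have "L * \<alpha> / (L + \<alpha>) * (norm (H *v x - H *v px))\<^sup>2
        + 1 / (onorm (\<lambda>v. H *v v))\<^sup>2 / (L + \<alpha>) * (norm (Gf x - Gf px))\<^sup>2 \<le> (Gf x - Gf px) \<bullet> (x - px)"
      by (rule composite_gradient_inequality[OF matrix_vector_mul_bounded_linear f_def grad_g grad_f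
            alpha_pos strongly_convex smooth])
    ultimately show ?thesis by linarith
  qed
  then show ?thesis unfolding Let_def by blast
qed

end
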